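(* Let $\mathcal B=(B_1,\dots,B_d)$ be a splitting of order $d$ of a matrix $B_J\in\mathbb R^{n\times n}$, and let $\mathcal S(\mathcal B)=(B_d,B_1,\dots,B_{d-1})$ be its cyclic shift. If $\lambda\neq 0$ is an eigenvalue of the iteration matrix $T(\mathcal B)$ with eigenvector $[\alpha_1^T,\dots,\alpha_d^T]^T$ ($\alpha_p\in\mathbb C^n$), then $\lambda$ is an eigenvalue of $T(\mathcal S(\mathcal B))$ with eigenvector $[\alpha_d^T,\lambda\alpha_1^T,\dots,\lambda\alpha_{d-1}^T]^T$.
   Context: For $B\in\mathbb R^{n\times n}$, a splitting of $B$ of order $d\ge1$ is an ordered $d$-tuple $\mathcal B=(B_1,\dots,B_d)$ of real $n\times n$ matrices with $B_p\neq O$ for all $p$, $\sum_{p=1}^d B_p=B$, and $B_p\circ B_q=O$ (Hadamard product, i.e. the $B_p$ have pairwise disjoint supports) for $p\ne q$. The iteration matrix of $\mathcal B$ is the $dn\times dn$ matrix $T(\mathcal B)=(I_{dn}-\mathcal L)^{-1}\mathcal U$, where $\mathcal L,\mathcal U$ are $d\times d$ block matrices with $n\times n$ blocks, $\mathcal L_{ij}=B_j$ if $i>j$ and $O$ otherwise, $\mathcal U_{ij}=B_j$ if $i\le j$ and $O$ otherwise. (It is the iteration matrix of the scheme $x_i^{(k+1)}=\sum_{j<i}B_jx_j^{(k+1)}+\sum_{j\ge i}B_jx_j^{(k)}+c$, $i=1,\dots,d$.) The cyclic shift of $\mathcal B$ is $\mathcal S(\mathcal B)=(B_d,B_1,\dots,B_{d-1})$.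 *)

theory Defs
  imports "Jordan_Normal_Form.Gauss_Jordan_Elimination" "Jordan_Normal_Form.Char_Poly"
begin

definition splitting :: "nat \<Rightarrow> real mat list \<Rightarrow> real mat \<Rightarrow> bool" where
  "splitting n Bs B \<longleftrightarrow>
     B \<in> carrier_mat n n \<and> Bs \<noteq> [] \<and>
     (\<forall>p < length Bs. Bs ! p \<in> carrier_mat n n \<and> Bs ! p \<noteq> 0\<^sub>m n n) \<and>
     foldr (+) Bs (0\<^sub>m n n) = B \<and>
     (\<forall>p < length Bs. \<forall>q < length Bs. p \<noteq> q \<longrightarrow>
        (\<forall>i < n. \<forall>j < n. (Bs ! p) $$ (i, j) * (Bs ! q) $$ (i, j) = 0))"

text \<open>Block matrices (d x d blocks of size n x n, 0-indexed blocks):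
  L_ij = B_j if i > j, U_ij = B_j if i \<le> j.\<close>
definition block_L :: "nat \<Rightarrow> 'a::zero mat list \<Rightarrow> 'a mat" where
  "block_L n Bs = mat (length Bs * n) (length Bs * n)
     (\<lambda>(r, c). if c div n < r div n then (Bs ! (c div n)) $$ (r mod n, c mod n) else 0)"

definition block_U :: "nat \<Rightarrow> 'a::zero mat list \<Rightarrow> 'a mat" where
  "block_U n Bs = mat (length Bs * n) (length Bs * n)
     (\<lambda>(r, c). if r div n \<le> c div n then (Bs ! (c div n)) $$ (r mod n, c mod n) else 0)"

text \<open>Iteration matrix T(B) = (I - L)^{-1} U  (I - L is unit block lower triangular,
  hence invertible, so mat_inverse returns Some).\<close>
definition iter_mat :: "nat \<Rightarrow> 'a::field mat list \<Rightarrow> 'a mat" where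
  "iter_mat n Bs = the (mat_inverse (1\<^sub>m (length Bs * n) - block_L n Bs)) * block_U n Bs"

definition cyc_shift :: "'a list \<Rightarrow> 'a list" where
  "cyc_shift Bs = last Bs # butlast Bs"

end

theory Submission
  imports Defs
begin

text \<open>
  Write a vector of length \<open>d n\<close> as blocks \<open>\<alpha>\<^sub>1, \<dots>, \<alpha>\<^sub>d\<close>. Since \<open>I - L\<close> is unit
  lower triangular, hence invertible, \<open>T v = \<lambda> v\<close> is equivalent to \<open>U v = \<lambda> (I - L) v\<close>,
  i.e. to the block equations
  \<open>\<lambda> \<alpha>\<^sub>i = \<lambda> (\<Sum>j<i. B\<^sub>j \<alpha>\<^sub>j) + (\<Sum>j\<ge>i. B\<^sub>j \<alpha>\<^sub>j)\<close>.
  For the shifted splitting and the rotated vector \<open>[\<alpha>\<^sub>d, \<lambda> \<alpha>\<^sub>1, \<dots>, \<lambda> \<alpha>\<^sub>d\<^sub>-\<^sub>1]\<close> the block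
  products become \<open>B\<^sub>d \<alpha>\<^sub>d\<close> and \<open>\<lambda> B\<^sub>j \<alpha>\<^sub>j\<close>, so its first equation is the last original one
  and every other equation is \<open>\<lambda>\<close> times an original one; \<open>\<lambda> \<noteq> 0\<close> keeps the rotated vector
  nonzero. The argument works over any field, and passing from real to complex entries
  commutes with \<open>T\<close> because matrix inverses are unique.
\<close>

lemma block_index_less:
  fixes i k d n :: nat
  assumes "i < d" "k < n"
  shows "i * n + k < d * n"
proof -
  have "i * n + k < Suc i * n" using assms(2) by simp
  also have "\<dots> \<le> d * n" using assms(1) by (intro mult_right_mono) auto
  finally show ?thesis .
qed

lemma sum_lessThan_mult_blocks:
  fixes f :: "nat \<Rightarrow> 'a::comm_monoid_add"
  shows "(\<Sum>c<d * n. f c) = (\<Sum>j<d. \<Sum>l<n. f (j * n + l))"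
proof -
  have "(\<Sum>c<d * n. f c) = (\<Sum>j<d. sum f {j * n..<j * n + n})"
    using sum.nat_group[of f n d] by simp
  also have "\<dots> = (\<Sum>j<d. \<Sum>l<n. f (j * n + l))"
    using sum.shift_bounds_nat_ivl[of f 0 "_ * n" n]
    by (simp add: lessThan_atLeast0 add.commute)
  finally show ?thesis .
qed

lemma eq_vec_blocksI:
  assumes "u \<in> carrier_vec (d * n)" "v \<in> carrier_vec (d * n)"
    and "\<And>i k. i < d \<Longrightarrow> k < n \<Longrightarrow> u $ (i * n + k) = v $ (i * n + k)"
  shows "u = v"
proof (rule eq_vecI)
  fix r assume "r < dim_vec v"
  then have r: "r < d * n" using assms(2) by simp
  then have "0 < n" by (cases n) auto
  then have "r div n < d" "r mod n < n" using r by (auto simp: div_less_iff_less_mult)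
  then show "u $ r = v $ r" using assms(3) by (metis div_mult_mod_eq)
qed (use assms in simp)

lemma dim_block_L [simp]:
    "dim_row (block_L n Bs) = length Bs * n" "dim_col (block_L n Bs) = length Bs * n"
  and dim_block_U [simp]:
    "dim_row (block_U n Bs) = length Bs * n" "dim_col (block_U n Bs) = length Bs * n"
  unfolding block_L_def block_U_def by simp_all

lemma block_L_carrier [simp]: "block_L n Bs \<in> carrier_mat (length Bs * n) (length Bs * n)"
  and block_U_carrier [simp]: "block_U n Bs \<in> carrier_mat (length Bs * n) (length Bs * n)"
  by (simp_all add: carrier_matI)

lemma one_minus_block_L_carrier [simp]:
  "1\<^sub>m (length Bs * n) - block_L n Bs \<in> carrier_mat (length Bs * n) (length Bs * n)"
  by (rule minus_carrier_mat) simp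

lemma det_one_minus_block_L: "det (1\<^sub>m (length Bs * n) - block_L n Bs) = (1 :: 'a::comm_ring_1)"
proof -
  let ?N = "length Bs * n" and ?M = "1\<^sub>m (length Bs * n) - block_L n Bs"
  have upper_zero: "?M $$ (i, j) = 0" if "i < j" "j < ?N" for i j
  proof -
    have "i div n \<le> j div n" using that by (simp add: div_le_mono)
    then show ?thesis using that unfolding block_L_def by auto
  qed
  have diag: "block_L n Bs $$ (i, i) = 0" if "i < ?N" for i
    using that unfolding block_L_def by auto
  have "diag_mat ?M = replicate ?N 1"
    by (rule nth_equalityI) (simp_all add: diag_mat_def diag)
  then show ?thesis
    using det_lower_triangular[OF upper_zero one_minus_block_L_carrier]
    by (simp add: prod_list_replicate)
qed

lemma obtain_mat_inverse:
  fixes A :: "'a::field mat"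
  assumes A: "A \<in> carrier_mat n n" and "det A \<noteq> 0"
  obtains B where "mat_inverse A = Some B" "A * B = 1\<^sub>m n" "B * A = 1\<^sub>m n" "B \<in> carrier_mat n n"
proof -
  have "A \<in> Units (ring_mat TYPE('a) n n)" using det_non_zero_imp_unit[OF A] assms(2) by auto
  then obtain B where "mat_inverse A = Some B" by (metis mat_inverse(1)[OF A] option.exhaust)
  with mat_inverse(2)[OF A] show ?thesis using that by blast
qed

lemma inverse_one_minus_block_L:
  fixes Bs :: "'a::field mat list"
  obtains Mi where "mat_inverse (1\<^sub>m (length Bs * n) - block_L n Bs) = Some Mi"
    "(1\<^sub>m (length Bs * n) - block_L n Bs) * Mi = 1\<^sub>m (length Bs * n)"
    "Mi * (1\<^sub>m (length Bs * n) - block_L n Bs) = 1\<^sub>m (length Bs * n)"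
    "Mi \<in> carrier_mat (length Bs * n) (length Bs * n)"
proof -
  have "det (1\<^sub>m (length Bs * n) - block_L n Bs) \<noteq> 0" by (simp add: det_one_minus_block_L)
  with obtain_mat_inverse[OF one_minus_block_L_carrier] that show ?thesis by blast
qed

lemma iter_mat_carrier [simp]: "iter_mat n Bs \<in> carrier_mat (length Bs * n) (length Bs * n)"
proof -
  obtain Mi where "mat_inverse (1\<^sub>m (length Bs * n) - block_L n Bs) = Some Mi"
    "Mi \<in> carrier_mat (length Bs * n) (length Bs * n)"
    by (rule inverse_one_minus_block_L)
  then show ?thesis unfolding iter_mat_def by simp
qed

lemma dim_row_iter_mat [simp]: "dim_row (iter_mat n Bs) = length Bs * n"
  using iter_mat_carrier by blast

lemma one_minus_block_L_mult_iter_mat: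
  "(1\<^sub>m (length Bs * n) - block_L n Bs) * iter_mat n Bs = block_U n Bs"
proof -
  let ?N = "length Bs * n" and ?M = "1\<^sub>m (length Bs * n) - block_L n Bs"
  obtain Mi where "mat_inverse ?M = Some Mi" "?M * Mi = 1\<^sub>m ?N" "Mi \<in> carrier_mat ?N ?N"
    by (rule inverse_one_minus_block_L)
  then show ?thesis
    unfolding iter_mat_def by (simp add: assoc_mult_mat[symmetric, of _ ?N ?N _ ?N _ ?N]
        left_mult_one_mat[OF block_U_carrier])
qed

context semiring_hom
begin

lemma mat_hom_block_L:
  assumes "\<forall>B \<in> set Bs. B \<in> carrier_mat n n"
  shows "mat\<^sub>h (block_L n Bs) = block_L n (map mat\<^sub>h Bs)"
proof (rule eq_matI)
  fix r c assume "r < dim_row (block_L n (map mat\<^sub>h Bs))" "c < dim_col (block_L n (map mat\<^sub>h Bs))"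
  then have "r < length Bs * n" "c < length Bs * n" by simp_all
  moreover from this have "c div n < length Bs" "0 < n"
    by (auto simp: less_mult_imp_div_less intro: Nat.gr0I)
  moreover from this have "Bs ! (c div n) \<in> carrier_mat n n" using assms by simp
  ultimately show "mat\<^sub>h (block_L n Bs) $$ (r, c) = block_L n (map mat\<^sub>h Bs) $$ (r, c)"
    unfolding block_L_def by auto
qed simp_all

lemma mat_hom_block_U:
  assumes "\<forall>B \<in> set Bs. B \<in> carrier_mat n n"
  shows "mat\<^sub>h (block_U n Bs) = block_U n (map mat\<^sub>h Bs)"
proof (rule eq_matI)
  fix r c assume "r < dim_row (block_U n (map mat\<^sub>h Bs))" "c < dim_col (block_U n (map mat\<^sub>h Bs))"
  then have "r < length Bs * n" "c < length Bs * n" by simp_all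
  moreover from this have "c div n < length Bs" "0 < n"
    by (auto simp: less_mult_imp_div_less intro: Nat.gr0I)
  moreover from this have "Bs ! (c div n) \<in> carrier_mat n n" using assms by simp
  ultimately show "mat\<^sub>h (block_U n Bs) $$ (r, c) = block_U n (map mat\<^sub>h Bs) $$ (r, c)"
    unfolding block_U_def by auto
qed simp_all

end

context field_hom
begin

lemma mat_inverse_mat_hom:
  assumes A: "A \<in> carrier_mat n n" and "mat_inverse A = Some B"
  shows "mat_inverse (mat\<^sub>h A) = Some (mat\<^sub>h B)"
proof -
  have AB: "A * B = 1\<^sub>m n" and B: "B \<in> carrier_mat n n"
    using mat_inverse(2)[OF A] assms(2) by auto
  have "det A * det B = 1" using det_mult[OF A B] AB by simp
  then have "det (mat\<^sub>h A) \<noteq> 0" by auto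
  then obtain C where C: "mat_inverse (mat\<^sub>h A) = Some C" "C * mat\<^sub>h A = 1\<^sub>m n" "C \<in> carrier_mat n n"
    using obtain_mat_inverse[of "mat\<^sub>h A" n] A by auto
  have "mat\<^sub>h A * mat\<^sub>h B = 1\<^sub>m n" using mat_hom_mult[OF A B] AB mat_hom_one by simp
  then have "C = (C * mat\<^sub>h A) * mat\<^sub>h B"
    using A B C(3) by (simp add: assoc_mult_mat[of _ n n _ n _ n])
  then show ?thesis using C(1,2) B by simp
qed

lemma mat_hom_iter_mat:
  assumes "\<forall>B \<in> set Bs. B \<in> carrier_mat n n"
  shows "mat\<^sub>h (iter_mat n Bs) = iter_mat n (map mat\<^sub>h Bs)"
proof -
  let ?N = "length Bs * n" and ?M = "1\<^sub>m (length Bs * n) - block_L n Bs"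
  obtain Mi where Mi: "mat_inverse ?M = Some Mi" "Mi \<in> carrier_mat ?N ?N"
    by (rule inverse_one_minus_block_L)
  have "mat\<^sub>h ?M = 1\<^sub>m ?N - mat\<^sub>h (block_L n Bs)"
    by (rule eq_matI) (auto simp: hom_minus)
  then have "mat\<^sub>h ?M = 1\<^sub>m ?N - block_L n (map mat\<^sub>h Bs)"
    using mat_hom_block_L[OF assms] by simp
  then have "mat_inverse (1\<^sub>m ?N - block_L n (map mat\<^sub>h Bs)) = Some (mat\<^sub>h Mi)"
    using mat_inverse_mat_hom[OF one_minus_block_L_carrier Mi(1)] by simp
  then show ?thesis
    unfolding iter_mat_def Mi(1)
    using mat_hom_mult[OF Mi(2) block_U_carrier] mat_hom_block_U[OF assms] by simp
qed

end

definition block_mult_vec :: "nat \<Rightarrow> 'a::semiring_0 mat \<Rightarrow> 'a vec \<Rightarrow> nat \<Rightarrow> nat \<Rightarrow> 'a" where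
  "block_mult_vec n B v j k = (\<Sum>l<n. B $$ (k, l) * v $ (j * n + l))"

lemma block_pattern_mult_vec:
  fixes Bs :: "'a::semiring_0 mat list" and P :: "nat \<Rightarrow> nat \<Rightarrow> bool"
  assumes v: "v \<in> carrier_vec (length Bs * n)" and "i < length Bs" "k < n"
  shows "(mat (length Bs * n) (length Bs * n)
            (\<lambda>(r, c). if P (r div n) (c div n) then (Bs ! (c div n)) $$ (r mod n, c mod n) else 0)
          *\<^sub>v v) $ (i * n + k)
       = (\<Sum>j<length Bs. if P i j then block_mult_vec n (Bs ! j) v j k else 0)"
proof -
  have "i * n + k < length Bs * n" using assms(2,3) by (rule block_index_less)
  then show ?thesis
    using v assms(3)
    by (auto simp: scalar_prod_def lessThan_atLeast0[symmetric] sum_lessThan_mult_blocks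
        block_mult_vec_def sum_distrib_left intro!: sum.cong)
qed

lemma block_L_mult_vec:
  assumes "v \<in> carrier_vec (length Bs * n)" "i < length Bs" "k < n"
  shows "(block_L n Bs *\<^sub>v v) $ (i * n + k)
       = (\<Sum>j<length Bs. if j < i then block_mult_vec n (Bs ! j) v j k else 0)"
  using block_pattern_mult_vec[OF assms, of "\<lambda>i j. j < i"] unfolding block_L_def by simp

lemma block_U_mult_vec:
  assumes "v \<in> carrier_vec (length Bs * n)" "i < length Bs" "k < n"
  shows "(block_U n Bs *\<^sub>v v) $ (i * n + k)
       = (\<Sum>j<length Bs. if i \<le> j then block_mult_vec n (Bs ! j) v j k else 0)"
  using block_pattern_mult_vec[OF assms, of "\<lambda>i j. i \<le> j"] unfolding block_U_def by simp

lemma eigen_equation_iff_left_invertible_factor: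
  fixes M T :: "'a::field mat"
  assumes M: "M \<in> carrier_mat n n" and T: "T \<in> carrier_mat n n"
    and Mi: "Mi \<in> carrier_mat n n" "Mi * M = 1\<^sub>m n" and v: "v \<in> carrier_vec n"
  shows "T *\<^sub>v v = lam \<cdot>\<^sub>v v \<longleftrightarrow> (M * T) *\<^sub>v v = lam \<cdot>\<^sub>v (M *\<^sub>v v)"
proof
  assume "T *\<^sub>v v = lam \<cdot>\<^sub>v v"
  then show "(M * T) *\<^sub>v v = lam \<cdot>\<^sub>v (M *\<^sub>v v)" using M T v by (simp add: mult_mat_vec)
next
  assume MT: "(M * T) *\<^sub>v v = lam \<cdot>\<^sub>v (M *\<^sub>v v)"
  have "T *\<^sub>v v = (Mi * M) *\<^sub>v (T *\<^sub>v v)" unfolding Mi(2) using T v by simp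
  also have "\<dots> = Mi *\<^sub>v ((M * T) *\<^sub>v v)" using M T Mi(1) v by simp
  also have "\<dots> = lam \<cdot>\<^sub>v ((Mi * M) *\<^sub>v v)" unfolding MT using M Mi(1) v by (simp add: mult_mat_vec)
  also have "\<dots> = lam \<cdot>\<^sub>v v" using Mi v by simp
  finally show "T *\<^sub>v v = lam \<cdot>\<^sub>v v" .
qed

lemma iter_mat_eigen_iff:
  fixes Bs :: "'a::field mat list"
  assumes v: "v \<in> carrier_vec (length Bs * n)"
  shows "iter_mat n Bs *\<^sub>v v = lam \<cdot>\<^sub>v v \<longleftrightarrow>
    (\<forall>i<length Bs. \<forall>k<n. lam * v $ (i * n + k) =
       (\<Sum>j<length Bs. (if j < i then lam else 1) * block_mult_vec n (Bs ! j) v j k))"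
proof -
  let ?N = "length Bs * n" and ?M = "1\<^sub>m (length Bs * n) - block_L n Bs"
  obtain Mi where Mi: "Mi * ?M = 1\<^sub>m ?N" "Mi \<in> carrier_mat ?N ?N"
    by (rule inverse_one_minus_block_L)
  have M_mult_vec: "?M *\<^sub>v v = v - block_L n Bs *\<^sub>v v"
    using minus_mult_distrib_mat_vec[OF one_carrier_mat block_L_carrier v] v by simp
  have entry: "(block_U n Bs *\<^sub>v v) $ (i * n + k) = (lam \<cdot>\<^sub>v (?M *\<^sub>v v)) $ (i * n + k) \<longleftrightarrow>
      lam * v $ (i * n + k) =
        (\<Sum>j<length Bs. (if j < i then lam else 1) * block_mult_vec n (Bs ! j) v j k)"
    if "i < length Bs" "k < n" for i k
  proof -
    define g where "g j = block_mult_vec n (Bs ! j) v j k" for j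
    have "i * n + k < ?N" using that by (rule block_index_less)
    then have "(lam \<cdot>\<^sub>v (?M *\<^sub>v v)) $ (i * n + k) =
        lam * (v $ (i * n + k) - (block_L n Bs *\<^sub>v v) $ (i * n + k))"
      using v by (simp add: M_mult_vec del: index_mult_mat_vec)
    also have "\<dots> = lam * (v $ (i * n + k) - (\<Sum>j<length Bs. if j < i then g j else 0))"
      using block_L_mult_vec[OF v that] unfolding g_def by simp
    moreover have "(block_U n Bs *\<^sub>v v) $ (i * n + k) = (\<Sum>j<length Bs. if i \<le> j then g j else 0)"
      using v that unfolding g_def by (rule block_U_mult_vec)
    moreover have "(\<Sum>j<length Bs. (if j < i then lam else 1) * g j) =
        lam * (\<Sum>j<length Bs. if j < i then g j else 0) + (\<Sum>j<length Bs. if i \<le> j then g j else 0)"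
      by (auto simp: sum_distrib_left sum.distrib[symmetric] intro!: sum.cong)
    ultimately show ?thesis unfolding g_def by (auto simp: algebra_simps)
  qed
  have "iter_mat n Bs *\<^sub>v v = lam \<cdot>\<^sub>v v \<longleftrightarrow> block_U n Bs *\<^sub>v v = lam \<cdot>\<^sub>v (?M *\<^sub>v v)"
    using eigen_equation_iff_left_invertible_factor
        [OF one_minus_block_L_carrier iter_mat_carrier Mi(2,1) v]
    by (simp add: one_minus_block_L_mult_iter_mat)
  also have "\<dots> \<longleftrightarrow> (\<forall>i<length Bs. \<forall>k<n. (block_U n Bs *\<^sub>v v) $ (i * n + k) =
      (lam \<cdot>\<^sub>v (?M *\<^sub>v v)) $ (i * n + k))"
    using mult_mat_vec_carrier[OF block_U_carrier v]
      mult_mat_vec_carrier[OF one_minus_block_L_carrier v]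
    by (auto intro!: eq_vec_blocksI[where d = "length Bs" and n = n])
  finally show ?thesis using entry by simp
qed

lemma length_cyc_shift [simp]: "xs \<noteq> [] \<Longrightarrow> length (cyc_shift xs) = length xs"
  unfolding cyc_shift_def by simp

lemma set_cyc_shift [simp]: "xs \<noteq> [] \<Longrightarrow> set (cyc_shift xs) = set xs"
  by (cases xs rule: rev_cases) (simp_all add: cyc_shift_def)

lemma cyc_shift_map: "xs \<noteq> [] \<Longrightarrow> cyc_shift (map f xs) = map f (cyc_shift xs)"
  unfolding cyc_shift_def by (simp add: last_map map_butlast)

lemma nth_cyc_shift_0: "xs \<noteq> [] \<Longrightarrow> cyc_shift xs ! 0 = xs ! (length xs - 1)"
  unfolding cyc_shift_def by (simp add: last_conv_nth)

lemma nth_cyc_shift_Suc: "Suc j < length xs \<Longrightarrow> cyc_shift xs ! Suc j = xs ! j"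
  unfolding cyc_shift_def by (simp add: nth_butlast)

definition block_rotate :: "nat \<Rightarrow> nat \<Rightarrow> 'a::times \<Rightarrow> 'a vec \<Rightarrow> 'a vec" where
  "block_rotate n d lam v = vec (d * n) (\<lambda>k. if k < n then v $ ((d - 1) * n + k) else lam * v $ (k - n))"

lemma block_rotate_carrier [simp]: "block_rotate n d lam v \<in> carrier_vec (d * n)"
  unfolding block_rotate_def by simp

lemma block_rotate_first:
  assumes "0 < d" "k < n"
  shows "block_rotate n d lam v $ k = v $ ((d - 1) * n + k)"
proof -
  have "k < d * n" using assms by (metis block_index_less mult_zero_left add_0)
  then show ?thesis using assms(2) unfolding block_rotate_def by simp
qed

lemma block_rotate_Suc:
  assumes "Suc j < d" "k < n"
  shows "block_rotate n d lam v $ (Suc j * n + k) = lam * v $ (j * n + k)"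
proof -
  have "Suc j * n + k < d * n" using assms by (rule block_index_less)
  then show ?thesis using assms(2) unfolding block_rotate_def by simp
qed

lemma block_mult_vec_block_rotate_0:
  "0 < d \<Longrightarrow> block_mult_vec n B (block_rotate n d lam v) 0 k = block_mult_vec n B v (d - 1) k"
  unfolding block_mult_vec_def by (simp add: block_rotate_first)

lemma block_mult_vec_block_rotate_Suc:
  fixes B :: "'a::comm_semiring_0 mat"
  assumes "Suc j < d"
  shows "block_mult_vec n B (block_rotate n d lam v) (Suc j) k = lam * block_mult_vec n B v j k"
  unfolding block_mult_vec_def sum_distrib_left
  by (intro sum.cong refl)
    (use assms block_rotate_Suc[of j d _ n lam v] in \<open>simp add: mult.left_commute\<close>)

lemma block_rotate_nonzero:
  fixes v :: "'a::field vec"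
  assumes v: "v \<in> carrier_vec (d * n)" "v \<noteq> 0\<^sub>v (d * n)" and "lam \<noteq> 0"
  shows "block_rotate n d lam v \<noteq> 0\<^sub>v (d * n)"
proof
  assume rot_0: "block_rotate n d lam v = 0\<^sub>v (d * n)"
  have "v $ (i * n + k) = 0" if "i < d" "k < n" for i k
  proof (cases "d = Suc i")
    case True
    then show ?thesis
      using block_rotate_first[of d k n lam v] rot_0 that block_index_less[of 0 d k n] by simp
  next
    case False
    then show ?thesis
      using block_rotate_Suc[of i d k n lam v] rot_0 that \<open>lam \<noteq> 0\<close>
        block_index_less[of "Suc i" d k n] by simp
  qed
  then have "v = 0\<^sub>v (d * n)" using v(1) by (intro eq_vec_blocksI) (auto simp: block_index_less)
  with v(2) show False ..
qed

lemma iter_mat_cyc_shift_eigen_equation: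
  fixes Bs :: "'a::field mat list"
  assumes "Bs \<noteq> []" and v: "v \<in> carrier_vec (length Bs * n)"
    and eigen: "iter_mat n Bs *\<^sub>v v = lam \<cdot>\<^sub>v v"
  shows "iter_mat n (cyc_shift Bs) *\<^sub>v block_rotate n (length Bs) lam v
       = lam \<cdot>\<^sub>v block_rotate n (length Bs) lam v"
proof -
  obtain e where d: "length Bs = Suc e" using \<open>Bs \<noteq> []\<close> by (cases Bs) auto
  let ?w = "block_rotate n (length Bs) lam v"
  define g where "g j k = block_mult_vec n (Bs ! j) v j k" for j k
  define g' where "g' j k = block_mult_vec n (cyc_shift Bs ! j) ?w j k" for j k
  have eq: "lam * v $ (i * n + k) = (\<Sum>j<Suc e. (if j < i then lam else 1) * g j k)"
    if "i < Suc e" "k < n" for i k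
    using iffD1[OF iter_mat_eigen_iff[OF v] eigen] that unfolding g_def d by blast
  have g'_0: "g' 0 k = g e k" for k
    using \<open>Bs \<noteq> []\<close> unfolding g'_def g_def
    by (simp add: nth_cyc_shift_0 block_mult_vec_block_rotate_0 d)
  have g'_Suc: "g' (Suc j) k = lam * g j k" if "j < e" for j k
    using that unfolding g'_def g_def
    by (simp add: nth_cyc_shift_Suc block_mult_vec_block_rotate_Suc d)
  have len: "length (cyc_shift Bs) = Suc e" using \<open>Bs \<noteq> []\<close> d by simp
  have "lam * ?w $ (i * n + k) = (\<Sum>j<length (cyc_shift Bs). (if j < i then lam else 1) * g' j k)"
    if i: "i < length (cyc_shift Bs)" and k: "k < n" for i k
  proof (cases i)
    case 0
    then have "lam * ?w $ (i * n + k) = lam * v $ (e * n + k)"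
      using k by (simp add: block_rotate_first d)
    also have "\<dots> = (\<Sum>j<e. lam * g j k) + g e k" using eq[of e k] k by simp
    finally show ?thesis unfolding len sum.lessThan_Suc_shift using 0 g'_0 g'_Suc by simp
  next
    case (Suc i')
    then have "lam * ?w $ (i * n + k) = lam * (lam * v $ (i' * n + k))"
      using i k block_rotate_Suc[of i' "length Bs" k n lam v] len by (simp add: d)
    also have "\<dots> = lam * ((\<Sum>j<e. (if j < i' then lam else 1) * g j k) + g e k)"
      using eq[of i' k] i k Suc len by simp
    finally show ?thesis unfolding len sum.lessThan_Suc_shift using Suc g'_0 g'_Suc
      by (simp add: sum_distrib_left algebra_simps)
  qed
  moreover have "?w \<in> carrier_vec (length (cyc_shift Bs) * n)" using \<open>Bs \<noteq> []\<close> by simp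
  ultimately show ?thesis using iter_mat_eigen_iff unfolding g'_def by blast
qed

lemma eigenvector_iter_mat_cyc_shift:
  fixes Bs :: "'a::field mat list"
  assumes "Bs \<noteq> []" "lam \<noteq> 0" "eigenvector (iter_mat n Bs) v lam"
  shows "eigenvector (iter_mat n (cyc_shift Bs)) (block_rotate n (length Bs) lam v) lam"
proof -
  have v: "v \<in> carrier_vec (length Bs * n)" "v \<noteq> 0\<^sub>v (length Bs * n)"
    and eigen: "iter_mat n Bs *\<^sub>v v = lam \<cdot>\<^sub>v v"
    using assms(3) unfolding eigenvector_def by auto
  show ?thesis
    unfolding eigenvector_def
    using iter_mat_cyc_shift_eigen_equation[OF assms(1) v(1) eigen]
      block_rotate_nonzero[OF v assms(2)] \<open>Bs \<noteq> []\<close> by simp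
qed

theorem lemma2p1:
  fixes n :: nat and Bs :: "real mat list" and BJ :: "real mat"
    and v :: "complex vec" and lam :: complex
  assumes "splitting n Bs BJ"
    and "lam \<noteq> 0"
    and "eigenvector (map_mat complex_of_real (iter_mat n Bs)) v lam"
  shows "eigenvalue (map_mat complex_of_real (iter_mat n (cyc_shift Bs))) lam \<and>
         eigenvector (map_mat complex_of_real (iter_mat n (cyc_shift Bs)))
           (vec (length Bs * n)
              (\<lambda>k. if k < n then v $ ((length Bs - 1) * n + k) else lam * v $ (k - n)))
           lam"
proof -
  let ?Cs = "map (map_mat complex_of_real) Bs"
  have "Bs \<noteq> []" and carrier: "\<forall>B \<in> set Bs. B \<in> carrier_mat n n"
    using assms(1) unfolding splitting_def by (auto simp: in_set_conv_nth)
  have "map_mat complex_of_real (iter_mat n Bs) = iter_mat n ?Cs"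
    using carrier by (rule of_real_hom.mat_hom_iter_mat)
  moreover have "map_mat complex_of_real (iter_mat n (cyc_shift Bs)) = iter_mat n (cyc_shift ?Cs)"
    using of_real_hom.mat_hom_iter_mat[of "cyc_shift Bs" n] carrier \<open>Bs \<noteq> []\<close>
    by (simp add: cyc_shift_map)
  ultimately have "eigenvector (map_mat complex_of_real (iter_mat n (cyc_shift Bs)))
      (block_rotate n (length Bs) lam v) lam"
    using eigenvector_iter_mat_cyc_shift[of ?Cs lam n v] \<open>Bs \<noteq> []\<close> assms(2,3) by simp
  then show ?thesis unfolding eigenvalue_def block_rotate_def by auto
qed

end
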